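(* Let $p$ be a prime, $k\ge2$ an integer, $R=\{t^k: t\in\mathbb F_p^*\}$, and $G=\{x\mapsto rx+b: r\in R,\ b\in\mathbb F_p\}\le{\rm AGL}(1,p)$. Then every element of $G\wr S_k$, in the product action on $\mathbb F_p^k$, is an imprimitive permutation of $\mathbb F_p^k$.
   Context: For $H\le{\rm Sym}(\Delta)$ and $K\le S_k$, $H\wr K$ in product action acts on $\Delta^k$ by applying $h_i$ to the $i$-th coordinate and permuting coordinates by $\sigma\in K$. A permutation of a set $\Omega$ of size $n$ is imprimitive if it preserves a partition of $\Omega$ into blocks of equal size $m$ with $1<m<n$. *)

theory Defs
  imports Main "HOL-Computational_Algebra.Primes" "HOL-Library.FuncSet" "HOL-Library.Disjoint_Sets" "HOL-Combinatorics.Permutations"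
begin

text \<open>The field F_p is modelled as {0..<p} with arithmetic mod p.
  The point set F_p^k is the set of extensional functions {0..<k} -> {0..<p}.\<close>

definition Fp :: "nat \<Rightarrow> nat set" where
  "Fp p = {..<p}"

definition space :: "nat \<Rightarrow> nat \<Rightarrow> (nat \<Rightarrow> nat) set" where
  "space p k = PiE {..<k} (\<lambda>_. Fp p)"

definition kth_powers :: "nat \<Rightarrow> nat \<Rightarrow> nat set" where
  "kth_powers p k = {(t ^ k) mod p | t. t \<in> Fp p \<and> t \<noteq> 0}"

text \<open>An element x |-> r x + b of G is encoded by the pair (r, b).\<close>
definition Ggrp :: "nat \<Rightarrow> nat \<Rightarrow> (nat \<times> nat) set" where
  "Ggrp p k = kth_powers p k \<times> Fp p"

definition aff_apply :: "nat \<Rightarrow> nat \<times> nat \<Rightarrow> nat \<Rightarrow> nat" where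
  "aff_apply p g x = (fst g * x + snd g) mod p"

text \<open>Product action of (h_0,...,h_{k-1}; sigma) in G wr S_k: apply h_i to the
  i-th coordinate, then move coordinate i to position sigma(i),
  i.e. y_{sigma i} = h_i(x_i).\<close>
definition wr_action :: "nat \<Rightarrow> nat \<Rightarrow> (nat \<Rightarrow> nat \<times> nat) \<Rightarrow> (nat \<Rightarrow> nat)
    \<Rightarrow> (nat \<Rightarrow> nat) \<Rightarrow> (nat \<Rightarrow> nat)" where
  "wr_action p k h \<sigma> x =
     (\<lambda>j\<in>{..<k}. aff_apply p (h (inv \<sigma> j)) (x (inv \<sigma> j)))"

definition imprimitive :: "'a set \<Rightarrow> ('a \<Rightarrow> 'a) \<Rightarrow> bool" where
  "imprimitive \<Omega> g \<longleftrightarrow>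
     (\<exists>P m. partition_on \<Omega> P \<and> (\<forall>B\<in>P. card B = m) \<and> 1 < m \<and> m < card \<Omega>
            \<and> (\<forall>B\<in>P. g ` B \<in> P))"

end

theory Submission
  imports Defs "HOL-Number_Theory.Cong" "HOL-Combinatorics.Orbits"
begin

text \<open>An element of G wr S_k acts on F_p^k as an affine map whose linear part is monomial:
  coordinate i is multiplied by r_i and moved to position \<sigma> i. The cosets of any subspace W invariant
  under this linear part, with 0 < dim W < k, form a block system. If \<sigma> leaves a proper nonempty set C
  of coordinates invariant, W is the coordinate subspace on C. Otherwise \<sigma> is a k-cycle; the product
  of the r_i is then a product of k-th powers, hence equal to c^k for some c \<noteq> 0, which makes c an
  eigenvalue of the linear part, and W is the eigenline.\<close>

lemma imprimitive_if_invariant_equiv: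
  assumes "finite \<Omega>" and "inj_on f \<Omega>" and "f ` \<Omega> \<subseteq> \<Omega>" and "equiv \<Omega> R"
    and pres: "\<And>x y. (x, y) \<in> R \<Longrightarrow> (f x, f y) \<in> R"
    and class_card: "\<And>x. x \<in> \<Omega> \<Longrightarrow> card (R `` {x}) = m"
    and "1 < m" and "m < card \<Omega>"
  shows "imprimitive \<Omega> f"
proof -
  have R: "R \<subseteq> \<Omega> \<times> \<Omega>" using \<open>equiv \<Omega> R\<close> by (auto elim: equivE)
  have "f ` X \<in> \<Omega> // R" if "X \<in> \<Omega> // R" for X
  proof -
    obtain x where x: "x \<in> \<Omega>" "X = R `` {x}" using \<open>X \<in> \<Omega> // R\<close> by (auto elim: quotientE)
    then have fx: "f x \<in> \<Omega>" using \<open>f ` \<Omega> \<subseteq> \<Omega>\<close> by blast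
    have sub: "f ` R `` {x} \<subseteq> R `` {f x}" using pres by blast
    have "R `` {x} \<subseteq> \<Omega>" using R by blast
    then have "card (f ` R `` {x}) = card (R `` {f x})"
      using card_image[OF inj_on_subset[OF \<open>inj_on f \<Omega>\<close>]] class_card x fx by simp
    then have "f ` R `` {x} = R `` {f x}"
      using card_subset_eq[OF _ sub] finite_subset[OF _ \<open>finite \<Omega>\<close>] R by blast
    then show ?thesis using x fx by (simp add: quotientI)
  qed
  moreover have "\<forall>X\<in>\<Omega> // R. card X = m" using class_card by (auto elim: quotientE)
  ultimately show ?thesis
    using partition_on_quotient[OF \<open>equiv \<Omega> R\<close>] assms(7,8) unfolding imprimitive_def by blast
qed

lemma finite_space: "finite (space p k)"
  unfolding space_def Fp_def by (simp add: finite_PiE)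

lemma card_space: "card (space p k) = p ^ k"
  unfolding space_def Fp_def by (simp add: card_PiE)

lemma coprime_kth_power:
  assumes "prime p" and "r \<in> kth_powers p k"
  shows "coprime r p"
proof -
  obtain t where t: "0 < t" "t < p" "r = t ^ k mod p"
    using assms(2) unfolding kth_powers_def Fp_def by auto
  then have "\<not> p dvd t" by (auto dest: dvd_imp_le)
  then have "\<not> p dvd t ^ k" using \<open>prime p\<close> prime_dvd_power by blast
  then have "coprime (t ^ k) p" using \<open>prime p\<close> by (metis prime_imp_coprime coprime_commute)
  then show ?thesis using t by simp
qed

lemma wr_action_apply:
  assumes "\<sigma> permutes {..<k}" and "i < k"
  shows "wr_action p k h \<sigma> x (\<sigma> i) = aff_apply p (h i) (x i)"
  using permutes_in_image[OF assms(1)] permutes_inverses(2)[OF assms(1)] assms(2)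
  unfolding wr_action_def by simp

lemma wr_action_in_space:
  assumes "0 < p"
  shows "wr_action p k h \<sigma> x \<in> space p k"
  using assms unfolding space_def wr_action_def Fp_def aff_apply_def by simp

lemma inj_on_wr_action:
  assumes "prime p" and h: "\<forall>i<k. h i \<in> Ggrp p k" and \<sigma>: "\<sigma> permutes {..<k}"
  shows "inj_on (wr_action p k h \<sigma>) (space p k)"
proof (rule inj_onI)
  fix x y assume x: "x \<in> space p k" and y: "y \<in> space p k"
    and eq: "wr_action p k h \<sigma> x = wr_action p k h \<sigma> y"
  show "x = y"
  proof (rule PiE_ext[OF x[unfolded space_def] y[unfolded space_def]])
    fix i assume "i \<in> {..<k}"
    then have i: "i < k" by simp
    obtain r b where hi: "h i = (r, b)" and r: "r \<in> kth_powers p k"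
      using h i unfolding Ggrp_def by (cases "h i") auto
    have "coprime r p" using coprime_kth_power[OF \<open>prime p\<close> r] .
    have "[r * x i + b = r * y i + b] (mod p)"
      using arg_cong[OF eq, of "\<lambda>z. z (\<sigma> i)"] wr_action_apply[OF \<sigma> i] hi
      unfolding aff_apply_def cong_def by simp
    then have "[x i = y i] (mod p)"
      using cong_add_rcancel_nat cong_mult_lcancel_nat[OF \<open>coprime r p\<close>] by blast
    moreover have "x i < p" "y i < p" using x y i unfolding space_def Fp_def by auto
    ultimately show "x i = y i" by (rule cong_less_modulus_unique_nat)
  qed
qed

lemma bij_betw_wr_action:
  assumes "prime p" and "\<forall>i<k. h i \<in> Ggrp p k" and "\<sigma> permutes {..<k}"
  shows "bij_betw (wr_action p k h \<sigma>) (space p k) (space p k)"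
proof -
  have "wr_action p k h \<sigma> ` space p k \<subseteq> space p k"
    using wr_action_in_space prime_gt_0_nat[OF \<open>prime p\<close>] by blast
  then show ?thesis
    using inj_on_wr_action[OF assms] card_image card_subset_eq[OF finite_space]
    unfolding bij_betw_def by metis
qed

lemma imprimitive_if_invariant_coordinates:
  assumes p: "prime p" and h: "\<forall>i<k. h i \<in> Ggrp p k" and \<sigma>: "\<sigma> permutes {..<k}"
    and C: "C \<noteq> {}" "C \<subset> {..<k}" "\<sigma> ` C \<subseteq> C"
  shows "imprimitive (space p k) (wr_action p k h \<sigma>)"
proof -
  define R where "R = {(x, y) \<in> space p k \<times> space p k. \<forall>j\<in>{..<k} - C. x j = y j}"
  have "finite C" using C(2) finite_subset by blast
  have "equiv (space p k) R" unfolding R_def by (rule equivI) (auto intro: refl_onI symI transI)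
  moreover have "(wr_action p k h \<sigma> x, wr_action p k h \<sigma> y) \<in> R" if xy: "(x, y) \<in> R" for x y
  proof -
    have "wr_action p k h \<sigma> x j = wr_action p k h \<sigma> y j" if j: "j \<in> {..<k} - C" for j
    proof -
      obtain i where i: "i < k" "j = \<sigma> i" using permutes_image[OF \<sigma>] j by (metis Diff_iff imageE lessThan_iff)
      then have "i \<notin> C" using j C(3) by blast
      then have "x i = y i" using xy i unfolding R_def by simp
      then show ?thesis using wr_action_apply[OF \<sigma> i(1)] i(2) by simp
    qed
    then show ?thesis using wr_action_in_space prime_gt_0_nat[OF p] unfolding R_def by blast
  qed
  moreover have "card (R `` {x}) = p ^ card C" if x: "x \<in> space p k" for x
  proof -
    have "bij_betw (\<lambda>y. restrict y C) (R `` {x}) (PiE C (\<lambda>_. Fp p))"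
    proof (rule bij_betw_byWitness[where f'="\<lambda>z j. if j \<in> C then z j else x j"])
      show "\<forall>y\<in>R `` {x}. (\<lambda>j. if j \<in> C then restrict y C j else x j) = y"
      proof
        fix y assume y: "y \<in> R `` {x}"
        show "(\<lambda>j. if j \<in> C then restrict y C j else x j) = y"
        proof
          fix j
          show "(if j \<in> C then restrict y C j else x j) = y j"
            using x y C(2) unfolding R_def space_def
            by (cases "j < k") (auto simp: PiE_def extensional_def)
        qed
      qed
      show "\<forall>z\<in>PiE C (\<lambda>_. Fp p). restrict (\<lambda>j. if j \<in> C then z j else x j) C = z"
        by (auto simp: PiE_def extensional_def restrict_def)
      show "(\<lambda>y. restrict y C) ` R `` {x} \<subseteq> PiE C (\<lambda>_. Fp p)"
        using C(2) unfolding R_def space_def by auto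
      show "(\<lambda>z j. if j \<in> C then z j else x j) ` PiE C (\<lambda>_. Fp p) \<subseteq> R `` {x}"
        using C(2) x unfolding space_def R_def by (auto simp: PiE_def extensional_def)
    qed
    then show ?thesis using \<open>finite C\<close> by (simp add: bij_betw_same_card card_PiE Fp_def)
  qed
  moreover have "1 < p ^ card C"
    using prime_gt_1_nat[OF p] C(1) \<open>finite C\<close> by (metis card_gt_0_iff one_less_power)
  moreover have "p ^ card C < card (space p k)"
    using prime_gt_1_nat[OF p] psubset_card_mono[OF _ C(2)] by (simp add: card_space)
  ultimately show ?thesis
    using finite_space inj_on_wr_action[OF p h \<sigma>] wr_action_in_space prime_gt_0_nat[OF p]
    by (intro imprimitive_if_invariant_equiv) auto
qed

lemma full_orbit_enumeration:
  assumes \<sigma>: "\<sigma> permutes {..<k}" and orb: "orbit \<sigma> a = {..<k}"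
  shows "bij_betw (\<lambda>j. (\<sigma> ^^ j) a) {..<k} {..<k}" and "(\<sigma> ^^ k) a = a"
proof -
  have "a \<in> orbit \<sigma> a"
    using \<sigma> by (intro permutation_self_in_orbit) (auto simp: permutation_permutes)
  define n where "n = funpow_dist1 \<sigma> a a"
  have img: "(\<lambda>j. (\<sigma> ^^ j) a) ` {..<n} = {..<k}"
    using orbit_conv_funpow_dist1[OF \<open>a \<in> orbit \<sigma> a\<close>] orb unfolding n_def by (simp add: atLeast0LessThan)
  moreover have inj: "inj_on (\<lambda>j. (\<sigma> ^^ j) a) {..<n}"
    using inj_on_funpow_dist1[OF \<open>a \<in> orbit \<sigma> a\<close>] unfolding n_def by (simp add: atLeast0LessThan)
  ultimately have "n = k" using card_image[OF inj] by simp
  then show "bij_betw (\<lambda>j. (\<sigma> ^^ j) a) {..<k} {..<k}" using img inj by (simp add: bij_betw_def)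
  show "(\<sigma> ^^ k) a = a" using funpow_dist1_prop[OF \<open>a \<in> orbit \<sigma> a\<close>] \<open>n = k\<close> unfolding n_def by simp
qed

text \<open>Along the cycle a, \<sigma> a, ..., the eigenvector is v (\<sigma>^j a) = r(a) r(\<sigma> a) ... r(\<sigma>^(j-1) a) c^(k-j);
  closing up the cycle costs exactly the congruence between the product of the r i and c^k.\<close>
lemma cycle_eigenvector:
  fixes r :: "nat \<Rightarrow> int" and c m :: int
  assumes bij: "bij_betw (\<lambda>j. (\<sigma> ^^ j) a) {..<k} {..<k}" and period: "(\<sigma> ^^ k) a = a"
    and "0 < k" and prod: "[(\<Prod>i<k. r i) = c ^ k] (mod m)"
  obtains v where "\<And>i. i < k \<Longrightarrow> [r i * v i = c * v (\<sigma> i)] (mod m)" and "v a = c ^ k"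
proof -
  define \<rho> where "\<rho> j = (\<sigma> ^^ j) a" for j
  define ind where "ind = inv_into {..<k} \<rho>"
  define u where "u j = (\<Prod>l<j. r (\<rho> l))" for j
  define v where "v i = u (ind i) * c ^ (k - ind i)" for i
  have bij\<rho>: "bij_betw \<rho> {..<k} {..<k}" using bij unfolding \<rho>_def .
  have ind_\<rho>: "ind (\<rho> j) = j" if "j < k" for j
    using bij\<rho> that unfolding ind_def bij_betw_def by (simp add: inv_into_f_f)
  have "\<rho> 0 = a" unfolding \<rho>_def by simp
  then have v_a: "v a = c ^ k" using ind_\<rho>[OF \<open>0 < k\<close>] unfolding v_def u_def by simp
  have "[r (\<rho> j) * v (\<rho> j) = c * v (\<sigma> (\<rho> j))] (mod m)" if j: "j < k" for j
  proof (cases "Suc j < k")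
    case True
    have "\<sigma> (\<rho> j) = \<rho> (Suc j)" unfolding \<rho>_def by simp
    moreover have "k - j = Suc (k - Suc j)" using True by simp
    ultimately have "r (\<rho> j) * v (\<rho> j) = c * v (\<sigma> (\<rho> j))"
      using ind_\<rho>[OF j] ind_\<rho>[OF True] by (simp add: v_def u_def algebra_simps)
    then show ?thesis by simp
  next
    case False
    then have k: "k = Suc j" using j by simp
    have "\<sigma> (\<rho> j) = a" using period k unfolding \<rho>_def by simp
    then have "v (\<sigma> (\<rho> j)) = c ^ k" using v_a by simp
    moreover have "r (\<rho> j) * v (\<rho> j) = c * (\<Prod>i<k. r i)"
    proof -
      have "r (\<rho> j) * v (\<rho> j) = c * u k" using ind_\<rho>[OF j] k unfolding v_def u_def by simp
      also have "u k = (\<Prod>i<k. r i)" unfolding u_def by (rule prod.reindex_bij_betw[OF bij\<rho>])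
      finally show ?thesis .
    qed
    ultimately show ?thesis using cong_scalar_left[OF prod, of c] by simp
  qed
  moreover have "\<exists>j<k. i = \<rho> j" if "i < k" for i
    using bij\<rho> that unfolding bij_betw_def by auto
  ultimately show ?thesis using that v_a by blast
qed

definition line_equiv :: "nat \<Rightarrow> nat \<Rightarrow> (nat \<Rightarrow> int) \<Rightarrow> ((nat \<Rightarrow> nat) \<times> (nat \<Rightarrow> nat)) set" where
  "line_equiv p k v = {(x, y) \<in> space p k \<times> space p k.
     \<exists>a. \<forall>j<k. [int (y j) - int (x j) = a * v j] (mod int p)}"

lemma equiv_line_equiv: "equiv (space p k) (line_equiv p k v)"
proof (rule equivI)
  show "line_equiv p k v \<subseteq> space p k \<times> space p k" unfolding line_equiv_def by blast
  show "refl_on (space p k) (line_equiv p k v)"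
    by (rule refl_onI) (auto simp: line_equiv_def intro: exI[of _ 0])
  show "sym (line_equiv p k v)"
  proof (rule symI)
    fix x y assume "(x, y) \<in> line_equiv p k v"
    then obtain a where "\<forall>j<k. [int (y j) - int (x j) = a * v j] (mod int p)" "x \<in> space p k" "y \<in> space p k"
      unfolding line_equiv_def by blast
    then have "\<forall>j<k. [int (x j) - int (y j) = (- a) * v j] (mod int p)"
      using cong_minus_minus_iff by (metis minus_diff_eq mult_minus_left)
    then show "(y, x) \<in> line_equiv p k v" using \<open>x \<in> space p k\<close> \<open>y \<in> space p k\<close>
      unfolding line_equiv_def by blast
  qed
  show "trans (line_equiv p k v)"
  proof (rule transI)
    fix x y z assume "(x, y) \<in> line_equiv p k v" "(y, z) \<in> line_equiv p k v"
    then obtain a b where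
      "\<forall>j<k. [int (y j) - int (x j) = a * v j] (mod int p)"
      "\<forall>j<k. [int (z j) - int (y j) = b * v j] (mod int p)" "x \<in> space p k" "z \<in> space p k"
      unfolding line_equiv_def by blast
    then have "\<forall>j<k. [int (z j) - int (x j) = (a + b) * v j] (mod int p)"
      using cong_add by (fastforce simp: algebra_simps)
    then show "(x, z) \<in> line_equiv p k v" using \<open>x \<in> space p k\<close> \<open>z \<in> space p k\<close>
      unfolding line_equiv_def by blast
  qed
qed

lemma card_line_equiv_class:
  assumes p: "prime p" and j0: "j0 < k" "\<not> int p dvd v j0" and x: "x \<in> space p k"
  shows "card (line_equiv p k v `` {x}) = p"
proof -
  define P where "P = int p"
  have "0 < P" using prime_gt_0_nat[OF p] unfolding P_def by simp
  define pt where "pt a = (\<lambda>j\<in>{..<k}. nat ((int (x j) + a * v j) mod P))" for a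
  have pt_cong: "[int (pt a j) = int (x j) + a * v j] (mod P)" if "j < k" for a j
    using that \<open>0 < P\<close> unfolding pt_def by simp
  have pt_space: "pt a \<in> space p k" for a
    using \<open>0 < P\<close> unfolding pt_def space_def Fp_def P_def by (simp add: nat_less_iff)
  have inj: "inj_on pt {0..<P}"
  proof (rule inj_onI)
    fix a b assume ab: "a \<in> {0..<P}" "b \<in> {0..<P}" and "pt a = pt b"
    have "[int (x j0) + a * v j0 = int (pt a j0)] (mod P)" using pt_cong[OF j0(1)] by (rule cong_sym)
    also have "pt a j0 = pt b j0" using \<open>pt a = pt b\<close> by simp
    also have "[int (pt b j0) = int (x j0) + b * v j0] (mod P)" by (rule pt_cong[OF j0(1)])
    finally have "[int (x j0) + a * v j0 = int (x j0) + b * v j0] (mod P)" .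
    moreover have "coprime (v j0) P"
      using j0(2) p unfolding P_def by (metis prime_imp_coprime coprime_commute prime_nat_int_transfer)
    ultimately have "[a = b] (mod P)" by (simp add: cong_add_lcancel cong_mult_rcancel)
    then show "a = b" using ab cong_less_imp_eq_int[of a P b] by simp
  qed
  have img: "pt ` {0..<P} = line_equiv p k v `` {x}"
  proof
    show "pt ` {0..<P} \<subseteq> line_equiv p k v `` {x}"
    proof
      fix y assume "y \<in> pt ` {0..<P}"
      then obtain a where "y = pt a" by blast
      have "[int (y j) - int (x j) = a * v j] (mod P)" if "j < k" for j
        using cong_diff[OF pt_cong[OF that] cong_refl[of "int (x j)"]] \<open>y = pt a\<close> by simp
      then have "(x, y) \<in> line_equiv p k v"
        using x pt_space \<open>y = pt a\<close> unfolding line_equiv_def P_def by blast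
      then show "y \<in> line_equiv p k v `` {x}" by simp
    qed
    show "line_equiv p k v `` {x} \<subseteq> pt ` {0..<P}"
    proof
      fix y assume "y \<in> line_equiv p k v `` {x}"
      then have "(x, y) \<in> line_equiv p k v" by simp
      then obtain a where y: "y \<in> space p k" and a: "\<forall>j<k. [int (y j) - int (x j) = a * v j] (mod P)"
        unfolding line_equiv_def P_def by blast
      have "y = pt (a mod P)"
      proof
        fix j
        show "y j = pt (a mod P) j"
        proof (cases "j < k")
          case True
          have "(int (x j) + (a mod P) * v j) mod P = (int (x j) + a * v j) mod P"
            by (metis mod_add_right_eq mod_mult_left_eq)
          also have "\<dots> = (int (x j) + (int (y j) - int (x j))) mod P"
            using a[rule_format, OF True] unfolding cong_def by (metis mod_add_right_eq)
          also have "\<dots> = int (y j)"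
            using PiE_mem[OF y[unfolded space_def]] True unfolding Fp_def P_def by simp
          finally show ?thesis using True unfolding pt_def by simp
        next
          case False
          then show ?thesis using PiE_arb[OF y[unfolded space_def]] unfolding pt_def by simp
        qed
      qed
      moreover have "a mod P \<in> {0..<P}" using \<open>0 < P\<close> by simp
      ultimately show "y \<in> pt ` {0..<P}" by (rule image_eqI)
    qed
  qed
  have "card (line_equiv p k v `` {x}) = card {0..<P}" using card_image[OF inj] img by simp
  then show ?thesis unfolding P_def by simp
qed

lemma imprimitive_if_eigenvector:
  assumes p: "prime p" and "2 \<le> k" and h: "\<forall>i<k. h i \<in> Ggrp p k" and \<sigma>: "\<sigma> permutes {..<k}"
    and eig: "\<And>i. i < k \<Longrightarrow> [int (fst (h i)) * v i = c * v (\<sigma> i)] (mod int p)"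
    and j0: "j0 < k" "\<not> int p dvd v j0"
  shows "imprimitive (space p k) (wr_action p k h \<sigma>)"
proof -
  let ?g = "wr_action p k h \<sigma>"
  have "(?g x, ?g y) \<in> line_equiv p k v" if xy: "(x, y) \<in> line_equiv p k v" for x y
  proof -
    obtain a where a: "\<forall>j<k. [int (y j) - int (x j) = a * v j] (mod int p)"
      using xy unfolding line_equiv_def by blast
    have "[int (?g y j) - int (?g x j) = (a * c) * v j] (mod int p)" if "j < k" for j
    proof -
      obtain i where i: "i < k" "j = \<sigma> i"
        using permutes_image[OF \<sigma>] \<open>j < k\<close> by (metis imageE lessThan_iff)
      obtain r b where hi: "h i = (r, b)" by (cases "h i")
      have g: "[int (?g z (\<sigma> i)) = int r * int (z i) + int b] (mod int p)" for z
        using wr_action_apply[OF \<sigma> i(1)] hi unfolding aff_apply_def cong_def by (simp add: of_nat_mod)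
      have "[int (?g y j) - int (?g x j)
          = (int r * int (y i) + int b) - (int r * int (x i) + int b)] (mod int p)"
        using cong_diff[OF g g] i(2) by simp
      also have "(int r * int (y i) + int b) - (int r * int (x i) + int b) = int r * (int (y i) - int (x i))"
        by (simp add: algebra_simps)
      also have "[\<dots> = int r * (a * v i)] (mod int p)" using a i(1) by (intro cong_scalar_left) simp
      also have "int r * (a * v i) = a * (int r * v i)" by simp
      also have "[\<dots> = a * (c * v (\<sigma> i))] (mod int p)" using eig[OF i(1)] hi by (intro cong_scalar_left) simp
      also have "a * (c * v (\<sigma> i)) = (a * c) * v j" using i(2) by simp
      finally show ?thesis .
    qed
    then show ?thesis using wr_action_in_space prime_gt_0_nat[OF p] unfolding line_equiv_def by blast
  qed
  moreover have "p < card (space p k)"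
    using prime_gt_1_nat[OF p] \<open>2 \<le> k\<close> power_strict_increasing[of 1 k p] by (simp add: card_space)
  ultimately show ?thesis
    using finite_space inj_on_wr_action[OF p h \<sigma>] wr_action_in_space prime_gt_0_nat[OF p]
      equiv_line_equiv card_line_equiv_class[of p j0 k v, OF p j0] prime_gt_1_nat[OF p]
    by (intro imprimitive_if_invariant_equiv[where R = "line_equiv p k v" and m = p]) auto
qed

lemma prod_kth_powers_cong:
  assumes "prime p" and "\<forall>i<k. r i \<in> kth_powers p k"
  obtains c :: int where "[(\<Prod>i<k. int (r i)) = c ^ k] (mod int p)" and "\<not> int p dvd c"
proof -
  have witnesses: "\<forall>i\<in>{..<k}. \<exists>t. 0 < t \<and> t < p \<and> r i = t ^ k mod p"
    using assms(2) unfolding kth_powers_def Fp_def by auto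
  obtain t where t: "\<And>i. i < k \<Longrightarrow> 0 < t i \<and> t i < p \<and> r i = t i ^ k mod p"
    using bchoice[OF witnesses] by auto
  have "[(\<Prod>i<k. int (r i)) = (\<Prod>i<k. int (t i) ^ k)] (mod int p)"
    using t by (intro cong_prod) (simp add: cong_def of_nat_mod)
  then have "[(\<Prod>i<k. int (r i)) = (\<Prod>i<k. int (t i)) ^ k] (mod int p)"
    by (simp add: prod_power_distrib)
  moreover have "\<not> int p dvd (\<Prod>i<k. int (t i))"
  proof
    assume "int p dvd (\<Prod>i<k. int (t i))"
    then obtain i where "i < k" "int p dvd int (t i)"
      using prime_dvd_prod_iff[of "{..<k}" "int p"] \<open>prime p\<close> by auto
    then show False using t[of i] by (auto dest: dvd_imp_le)
  qed
  ultimately show ?thesis using that by blast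
qed

theorem mainTheorem7:
  fixes p k :: nat and h :: "nat \<Rightarrow> nat \<times> nat" and \<sigma> :: "nat \<Rightarrow> nat"
  assumes "prime p" and "k \<ge> 2"
    and "\<forall>i<k. h i \<in> Ggrp p k"
    and "\<sigma> permutes {..<k}"
  shows "bij_betw (wr_action p k h \<sigma>) (space p k) (space p k)
         \<and> imprimitive (space p k) (wr_action p k h \<sigma>)"
proof -
  note p = \<open>prime p\<close> and h = \<open>\<forall>i<k. h i \<in> Ggrp p k\<close> and \<sigma> = \<open>\<sigma> permutes {..<k}\<close>
  have "imprimitive (space p k) (wr_action p k h \<sigma>)"
  proof (cases "orbit \<sigma> 0 = {..<k}")
    case False
    have "orbit \<sigma> 0 \<subseteq> {..<k}" using permutes_orbit_subset[OF \<sigma>] \<open>k \<ge> 2\<close> by simp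
    then have "orbit \<sigma> 0 \<subset> {..<k}" using \<open>orbit \<sigma> 0 \<noteq> {..<k}\<close> by blast
    moreover have "\<sigma> ` orbit \<sigma> 0 \<subseteq> orbit \<sigma> 0" by (blast intro: orbit.step)
    ultimately show ?thesis by (intro imprimitive_if_invariant_coordinates[OF p h \<sigma> orbit_nonempty])
  next
    case True
    have "0 < k" using \<open>k \<ge> 2\<close> by simp
    have "\<forall>i<k. fst (h i) \<in> kth_powers p k" using h unfolding Ggrp_def by (simp add: mem_Times_iff)
    then obtain c where c: "[(\<Prod>i<k. int (fst (h i))) = c ^ k] (mod int p)" "\<not> int p dvd c"
      by (rule prod_kth_powers_cong[OF p])
    obtain v where eig: "\<And>i. i < k \<Longrightarrow> [int (fst (h i)) * v i = c * v (\<sigma> i)] (mod int p)"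
      and "v 0 = c ^ k"
      using cycle_eigenvector[OF full_orbit_enumeration[OF \<sigma> True] \<open>0 < k\<close> c(1)] by blast
    then have "\<not> int p dvd v 0" using c(2) prime_dvd_power[of "int p" c k] p by auto
    then show ?thesis by (intro imprimitive_if_eigenvector[OF p \<open>k \<ge> 2\<close> h \<sigma> eig \<open>0 < k\<close>])
  qed
  then show ?thesis using bij_betw_wr_action[OF p h \<sigma>] by blast
qed

end
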